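(* There is a constant $c>0$ such that for every $\omega$-word $\xi\in X^\omega$ that is quasiperiodic (with some quasiperiod $q\in X^*\setminus\{e\}$) there is $n_\xi\in\mathbb{N}$ with $f(\xi,n)\le c\cdot t_P^n$ for all $n\ge n_\xi$, where $t_P\approx1.324718$ is the unique real root of $t^3-t-1$.
   Context: $X$ is a finite alphabet with $|X|\ge2$; $X^*$ the finite words (empty word $e$), $X^\omega$ the infinite words, $X^n$ the words of length $n$. $w\sqsubseteq\eta$ means $w$ is a prefix of $\eta$. An $\omega$-word $\xi$ is quasiperiodic with quasiperiod $q\in X^*\setminus\{e\}$ if for every $j\in\mathbb{N}$ there is a prefix $u_j\sqsubseteq\xi$ with $j-|q|<|u_j|\le j$ and $u_j\cdot q\sqsubseteq\xi$. $f(\xi,n):=|\mathrm{infix}(\xi)\cap X^n|$ is the number of distinct factors (subwords) of $\xi$ of length $n$. *)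

theory Defs
  imports Complex_Main
begin

definition pref :: "(nat \<Rightarrow> 'a) \<Rightarrow> nat \<Rightarrow> 'a list" where
  "pref \<xi> n = map \<xi> [0..<n]"

definition is_prefix :: "'a list \<Rightarrow> (nat \<Rightarrow> 'a) \<Rightarrow> bool" where
  "is_prefix w \<xi> \<longleftrightarrow> pref \<xi> (length w) = w"

definition quasiperiod :: "(nat \<Rightarrow> 'a) \<Rightarrow> 'a list \<Rightarrow> bool" where
  "quasiperiod \<xi> q \<longleftrightarrow> q \<noteq> [] \<and>
     (\<forall>j::nat. \<exists>u. is_prefix u \<xi> \<and> int j - int (length q) < int (length u) \<and>
        length u \<le> j \<and> is_prefix (u @ q) \<xi>)"

definition quasiperiodic :: "(nat \<Rightarrow> 'a) \<Rightarrow> bool" where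
  "quasiperiodic \<xi> \<longleftrightarrow> (\<exists>q. quasiperiod \<xi> q)"

definition infixes :: "(nat \<Rightarrow> 'a) \<Rightarrow> 'a list set" where
  "infixes \<xi> = {map \<xi> [i..<i+m] | i m. True}"

definition subword_complexity :: "(nat \<Rightarrow> 'a) \<Rightarrow> nat \<Rightarrow> nat" where
  "subword_complexity \<xi> n = card (infixes \<xi> \<inter> {w. length w = n})"

definition t_P :: real where
  "t_P = (THE t::real. t ^ 3 - t - 1 = 0)"

end

theory Submission
  imports Defs
begin

(* Let q be a shortest quasiperiod of xi, m = |q|, and p the least period of q.
   Minimality of q forces m < 2p: otherwise the border of q of length m - p
   would already cover xi.  Two occurrences of q closer than m differ by a
   period of q, so occurrences of q lie at least p apart.  Hence every factor
   of length N starting at an occurrence of q is (prefix of q of length d) @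
   (factor of length N - d starting at the next occurrence) with p <= d <= m,
   and the number of such "anchored" factors is at most lam^N whenever the
   Kraft-type sum  sum_{d=p..m} lam^(-d)  is at most 1.  An arbitrary factor
   of length n is a suffix of a prefix of q followed by an anchored factor,
   which costs a factor m^2.  For lam = t_P the Kraft sum is <= 1 whenever
   1 <= p <= m < 2p, using x^5 = 1 - x for x = 1/t_P; if p <= 3 then m <= 5
   and we get the bound 25 t_P^n, and if p >= 4 the inequality is strict, so
   a slightly smaller lam works and m^2 lam^n <= 25 t_P^n eventually. *)

(* The real root is
   unique because x^3 - x - 1 = (x - r)((x + r/2)^2 + 3r^2/4 - 1) and the
   quadratic factor is positive, so the description in the definition of t_P
   is determined. *)
lemma plastic_number:
  shows "t_P ^ 3 = t_P + 1 \<and> 1.324 \<le> t_P \<and> t_P \<le> 1.325"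
proof -
  have "\<exists>r::real. 1.324 \<le> r \<and> r \<le> 1.325 \<and> (\<lambda>x. x^3 - x - 1) r = 0"
    by (rule IVT) (auto simp: power3_eq_cube intro!: continuous_intros)
  then obtain r :: real where r: "1.324 \<le> r" "r \<le> 1.325" "r^3 - r - 1 = 0"
    by auto
  have "t_P = r" unfolding t_P_def
  proof (rule the_equality)
    show "r^3 - r - 1 = 0" by fact
    fix y :: real assume y: "y^3 - y - 1 = 0"
    have factor: "(y - r) * ((y + r/2)^2 + 3/4 * r^2 - 1) = 0"
      using y r(3) by (simp add: algebra_simps power2_eq_square power3_eq_cube)
    have "1.324 * 1.324 \<le> r * r" using r(1) by (intro mult_mono) auto
    hence "4/3 < r^2" by (simp add: power2_eq_square)
    moreover have "0 \<le> (y + r/2)^2" by simp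
    ultimately have "(y + r/2)^2 + 3/4 * r^2 - 1 > 0" by linarith
    with factor show "y = r" by simp
  qed
  with r show ?thesis by (simp add: algebra_simps)
qed

lemma plastic_reciprocal:
  "0.754 \<le> 1/t_P \<and> 1/t_P \<le> 0.756 \<and> (1/t_P)^3 = 1 - (1/t_P)^2 \<and> (1/t_P)^5 = 1 - 1/t_P"
proof -
  define x where "x = 1/t_P"
  have t: "t_P^3 = t_P + 1" "1.324 \<le> t_P" "t_P \<le> 1.325"
    using plastic_number by auto
  have bounds: "0.754 \<le> x" "x \<le> 0.756"
    using t unfolding x_def by (simp_all add: field_simps)
  have x3: "x^3 = 1 - x^2"
  proof -
    have "x^3 * t_P^3 = 1" using t by (simp add: x_def power_divide)
    moreover have "x^3 * t_P = x^2" using t(2)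
      by (simp add: x_def power2_eq_square power3_eq_cube)
    ultimately show ?thesis using t(1) by (simp add: algebra_simps)
  qed
  have "x^5 = 1 - x"
    using arg_cong[OF x3, of "(*) (x^2)"] arg_cong[OF x3, of "(*) x"] x3
    by (simp add: algebra_simps power_numeral_reduce)
  with bounds x3 show ?thesis unfolding x_def by blast
qed

(* The core numerical inequality x^p - x^(2p) <= x^5 for x = 1/t_P, with
   equality only at p = 2, 3; strictness for p >= 4 is what allows a
   uniform constant. *)
lemma plastic_gap:
  assumes "1 \<le> p"
  shows "(1/t_P)^p - (1/t_P)^(2*p) \<le> (1/t_P)^5 \<and>
         (4 \<le> p \<longrightarrow> (1/t_P)^p - (1/t_P)^(2*p) < (1/t_P)^5)"
proof -
  define x where "x = 1/t_P"
  have x_lo: "0.754 \<le> x" and x_hi: "x \<le> 0.756" and x3: "x^3 = 1 - x^2" and x5: "x^5 = 1 - x"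
    using plastic_reciprocal unfolding x_def by auto
  have x2_lo: "0.754 * x \<le> x^2" and x2_hi: "x^2 \<le> 0.756 * x"
    using x_lo x_hi by (simp_all add: power2_eq_square)
  have x4: "x^4 = x^2 + x - 1"
    using arg_cong[OF x3, of "(*) x"] x3 by (simp add: algebra_simps power_numeral_reduce)
  have x6: "x^6 = x - x^2"
    using arg_cong[OF x5, of "(*) x"] by (simp add: algebra_simps power_numeral_reduce)
  have x8: "x^8 = 2 - x - 2 * x^2"
    using arg_cong[OF x6, of "(*) (x^2)"] x3 x4
    by (simp add: algebra_simps power_numeral_reduce)
  consider "p = 1" | "p = 2" | "p = 3" | "p = 4" | "5 \<le> p" using assms by linarith
  hence "x^p - x^(2*p) \<le> x^5 \<and> (4 \<le> p \<longrightarrow> x^p - x^(2*p) < x^5)"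
  proof cases
    case 5
    have "x^p \<le> x^5" using 5 x_lo x_hi by (intro power_decreasing) auto
    moreover have "0 < x^(2*p)" using x_lo by simp
    ultimately show ?thesis by simp
  qed (use x_lo x_hi x2_lo x2_hi x3 x4 x5 x6 x8 in simp_all)
  thus ?thesis unfolding x_def .
qed

(* Kraft inequality for t_P: for 1 <= p <= m < 2p the geometric sum
   (x^p - x^(m+1))/(1 - x) is bounded by x^5/(1 - x) = 1. *)
lemma plastic_kraft:
  assumes "1 \<le> p" "p \<le> m" "m < 2*p"
  shows "(\<Sum>d=p..m. (1/t_P)^d) \<le> 1 \<and> (4 \<le> p \<longrightarrow> (\<Sum>d=p..m. (1/t_P)^d) < 1)"
proof -
  define x where "x = 1/t_P"
  have x_lo: "0.754 \<le> x" and x_hi: "x \<le> 0.756" and x5: "x^5 = 1 - x"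
    using plastic_reciprocal unfolding x_def by auto
  hence x0: "0 < x" and x1: "x < 1" by simp_all
  have geometric: "(\<Sum>d=p..m. x^d) = (x^p - x^Suc m) / (1 - x)"
    using assms x1 by (simp add: sum_gp)
  have "x^(2*p) \<le> x^Suc m" using assms x0 x1 by (intro power_decreasing) auto
  hence "x^p - x^Suc m \<le> x^5 \<and> (4 \<le> p \<longrightarrow> x^p - x^Suc m < x^5)"
    using plastic_gap[OF assms(1)] unfolding x_def by auto
  thus ?thesis using x1 x5 unfolding geometric x_def[symmetric]
    by (simp add: divide_le_eq_1 divide_less_eq_1)
qed

lemma kraft_slack:
  fixes t :: real
  assumes t: "1 < t" and p: "1 \<le> p" "p \<le> m" and S1: "(\<Sum>d=p..m. (1/t)^d) < 1"
  shows "\<exists>lam. 1 \<le> lam \<and> lam < t \<and> (\<Sum>d=p..m. (1/lam)^d) \<le> 1"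
proof -
  define S where "S = (\<Sum>d=p..m. (1/t)^d)"
  have S0: "0 < S" unfolding S_def using p t by (intro sum_pos) auto
  have m0: "0 < m" using p by simp
  define r where "r = root m S"
  have r0: "0 < r" and r1: "r < 1" using S0 S1 m0 by (simp_all add: r_def S_def)
  have rm: "r^m = S" using S0 m0 by (simp add: r_def real_root_pow_pos)
  define lam where "lam = max 1 (t * r)"
  have "(\<Sum>d=p..m. (1/lam)^d) \<le> (\<Sum>d=p..m. (1/t)^d / r^m)"
  proof (rule sum_mono)
    fix d assume d: "d \<in> {p..m}"
    have "(1/lam)^d \<le> (1/(t*r))^d"
      using t r0 by (intro power_mono) (auto simp: lam_def divide_simps)
    also have "\<dots> = (1/t)^d / r^d" by (simp add: power_divide power_mult_distrib)
    also have "\<dots> \<le> (1/t)^d / r^m"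
      using d r0 r1 t by (intro divide_left_mono power_decreasing) auto
    finally show "(1/lam)^d \<le> (1/t)^d / r^m" .
  qed
  also have "\<dots> = S / r^m" by (simp add: S_def sum_divide_distrib)
  also have "\<dots> = 1" using rm S0 by simp
  finally have "(\<Sum>d=p..m. (1/lam)^d) \<le> 1" .
  moreover have "1 \<le> lam" "lam < t" using t r0 r1 by (auto simp: lam_def)
  ultimately show ?thesis by blast
qed

lemma eventually_dominated:
  fixes lam t C K :: real
  assumes "0 \<le> lam" "lam < t" "0 < C"
  shows "\<exists>N. \<forall>n\<ge>N. K * lam^n \<le> C * t^n"
proof -
  have t0: "0 < t" using assms by linarith
  have "(\<lambda>n. K * (lam/t)^n) \<longlonglongrightarrow> 0"
    using assms t0 by (intro tendsto_mult_right_zero LIMSEQ_power_zero) simp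
  hence "eventually (\<lambda>n. K * (lam/t)^n < C) sequentially"
    using assms(3) by (rule order_tendstoD(2))
  then obtain N where N: "\<And>n. N \<le> n \<Longrightarrow> K * (lam/t)^n < C"
    unfolding eventually_sequentially by blast
  have "K * lam^n \<le> C * t^n" if "N \<le> n" for n
  proof -
    have "K * lam^n = K * (lam/t)^n * t^n" using t0 by (simp add: power_divide)
    also have "\<dots> \<le> C * t^n" using N[OF that] t0 by (intro mult_right_mono) auto
    finally show ?thesis .
  qed
  thus ?thesis by blast
qed

definition occurs_at :: "(nat \<Rightarrow> 'a) \<Rightarrow> 'a list \<Rightarrow> nat \<Rightarrow> bool" where
  "occurs_at \<xi> q s \<longleftrightarrow> (\<forall>k<length q. \<xi> (s + k) = q ! k)"

definition factor :: "(nat \<Rightarrow> 'a) \<Rightarrow> nat \<Rightarrow> nat \<Rightarrow> 'a list" where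
  "factor \<xi> i n = map \<xi> [i..<i + n]"

definition covers :: "(nat \<Rightarrow> 'a) \<Rightarrow> 'a list \<Rightarrow> bool" where
  "covers \<xi> q \<longleftrightarrow> (\<forall>j. \<exists>s. occurs_at \<xi> q s \<and> s \<le> j \<and> j < s + length q)"

definition spaced :: "(nat \<Rightarrow> 'a) \<Rightarrow> 'a list \<Rightarrow> nat \<Rightarrow> bool" where
  "spaced \<xi> q p \<longleftrightarrow>
     (\<forall>s s'. occurs_at \<xi> q s \<longrightarrow> occurs_at \<xi> q s' \<longrightarrow> s < s' \<longrightarrow> p \<le> s' - s)"

definition anchored :: "(nat \<Rightarrow> 'a) \<Rightarrow> 'a list \<Rightarrow> nat \<Rightarrow> 'a list set" where
  "anchored \<xi> q N = (\<lambda>s. factor \<xi> s N) ` {s. occurs_at \<xi> q s}"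

definition period :: "'a list \<Rightarrow> nat \<Rightarrow> bool" where
  "period q d \<longleftrightarrow> 0 < d \<and> d \<le> length q \<and> (\<forall>i. i + d < length q \<longrightarrow> q ! i = q ! (i + d))"

lemma occurs_at_iff_factor: "occurs_at \<xi> q s \<longleftrightarrow> factor \<xi> s (length q) = q"
proof
  assume "occurs_at \<xi> q s"
  thus "factor \<xi> s (length q) = q"
    unfolding occurs_at_def factor_def by (intro nth_equalityI) simp_all
next
  assume eq: "factor \<xi> s (length q) = q"
  show "occurs_at \<xi> q s" unfolding occurs_at_def
  proof (intro allI impI)
    fix k assume "k < length q"
    hence "factor \<xi> s (length q) ! k = \<xi> (s + k)" by (simp add: factor_def)
    thus "\<xi> (s + k) = q ! k" using eq by simp
  qed
qed

lemma length_factor [simp]: "length (factor \<xi> i n) = n"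
  by (simp add: factor_def)

lemma factor_append: "factor \<xi> i (a + b) = factor \<xi> i a @ factor \<xi> (i + a) b"
proof -
  have assoc: "i + (a + b) = (i + a) + b" by simp
  show ?thesis unfolding factor_def assoc upt_add_eq_append[OF le_add1] map_append ..
qed

lemma factor_within_occurrence:
  assumes "occurs_at \<xi> q s" "a \<le> d" "d \<le> length q"
  shows "factor \<xi> (s + a) (d - a) = drop a (take d q)"
proof (rule nth_equalityI)
  show "length (factor \<xi> (s + a) (d - a)) = length (drop a (take d q))" using assms by simp
  fix k assume "k < length (factor \<xi> (s + a) (d - a))"
  hence k: "k < d - a" by simp
  have "factor \<xi> (s + a) (d - a) ! k = \<xi> (s + (a + k))" using k by (simp add: factor_def add.assoc)
  also have "\<dots> = q ! (a + k)" using assms(1,3) k unfolding occurs_at_def by simp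
  also have "\<dots> = drop a (take d q) ! k" using k assms by simp
  finally show "factor \<xi> (s + a) (d - a) ! k = drop a (take d q) ! k" .
qed

lemma prefix_factor:
  assumes "occurs_at \<xi> q s" "d \<le> length q"
  shows "factor \<xi> s d = take d q"
  using factor_within_occurrence[OF assms(1) _ assms(2), of 0] by simp

lemma quasiperiod_iff_covers: "quasiperiod \<xi> q \<longleftrightarrow> q \<noteq> [] \<and> covers \<xi> q"
proof -
  have prefix_iff: "is_prefix (pref \<xi> s @ q) \<xi> \<longleftrightarrow> occurs_at \<xi> q s" for s
  proof -
    have "pref \<xi> (s + length q) = pref \<xi> s @ factor \<xi> s (length q)"
      unfolding pref_def factor_def upt_add_eq_append[OF le0] by simp
    thus ?thesis by (simp add: is_prefix_def occurs_at_iff_factor pref_def)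
  qed
  have "(\<exists>u. is_prefix u \<xi> \<and> int j - int (length q) < int (length u) \<and>
            length u \<le> j \<and> is_prefix (u @ q) \<xi>) \<longleftrightarrow>
        (\<exists>s. occurs_at \<xi> q s \<and> s \<le> j \<and> j < s + length q)" for j
  proof
    assume "\<exists>u. is_prefix u \<xi> \<and> int j - int (length q) < int (length u) \<and>
                length u \<le> j \<and> is_prefix (u @ q) \<xi>"
    then obtain u where u: "is_prefix u \<xi>" "int j - int (length q) < int (length u)"
      "length u \<le> j" "is_prefix (u @ q) \<xi>" by blast
    have "u = pref \<xi> (length u)" using u(1) by (simp add: is_prefix_def)
    with u show "\<exists>s. occurs_at \<xi> q s \<and> s \<le> j \<and> j < s + length q"
      using prefix_iff[of "length u"] by (intro exI[of _ "length u"]) auto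
  next
    assume "\<exists>s. occurs_at \<xi> q s \<and> s \<le> j \<and> j < s + length q"
    then obtain s where "occurs_at \<xi> q s" "s \<le> j" "j < s + length q" by blast
    moreover have "is_prefix (pref \<xi> s) \<xi>" "length (pref \<xi> s) = s"
      by (simp_all add: is_prefix_def pref_def)
    ultimately show "\<exists>u. is_prefix u \<xi> \<and> int j - int (length q) < int (length u) \<and>
                         length u \<le> j \<and> is_prefix (u @ q) \<xi>"
      using prefix_iff[of s] by (intro exI[of _ "pref \<xi> s"]) auto
  qed
  thus ?thesis unfolding quasiperiod_def covers_def by simp
qed

lemma factors_of_length: "infixes \<xi> \<inter> {w. length w = n} = range (\<lambda>i. factor \<xi> i n)"
proof
  show "infixes \<xi> \<inter> {w. length w = n} \<subseteq> range (\<lambda>i. factor \<xi> i n)"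
  proof
    fix w assume "w \<in> infixes \<xi> \<inter> {w. length w = n}"
    then obtain i m where "w = map \<xi> [i..<i + m]" "length w = n" unfolding infixes_def by blast
    thus "w \<in> range (\<lambda>i. factor \<xi> i n)" by (simp add: factor_def)
  qed
  show "range (\<lambda>i. factor \<xi> i n) \<subseteq> infixes \<xi> \<inter> {w. length w = n}"
    unfolding infixes_def factor_def by auto
qed

lemma finite_anchored: "finite (anchored (\<xi> :: nat \<Rightarrow> 'a::finite) q N)"
proof (rule finite_subset)
  show "anchored \<xi> q N \<subseteq> {w. length w = N}" by (auto simp: anchored_def)
  show "finite {w :: 'a list. length w = N}"
    using finite_lists_length_eq[of "UNIV :: 'a set" N] by simp
qed

lemma next_occurrence:
  assumes "covers \<xi> q" "occurs_at \<xi> q s"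
  obtains s' where "occurs_at \<xi> q s'" "s < s'" "s' \<le> s + length q"
proof -
  obtain s' where "occurs_at \<xi> q s'" "s' \<le> s + length q" "s + length q < s' + length q"
    using assms(1) unfolding covers_def by blast
  thus ?thesis using that by auto
qed

lemma occurrence_distance_period:
  assumes "occurs_at \<xi> q s" "occurs_at \<xi> q s'" "s < s'" "s' - s < length q"
  shows "period q (s' - s)"
  unfolding period_def
proof (intro conjI allI impI)
  show "0 < s' - s" "s' - s \<le> length q" using assms by auto
  fix i assume i: "i + (s' - s) < length q"
  have "q ! (i + (s' - s)) = \<xi> (s + (i + (s' - s)))" using assms(1) i unfolding occurs_at_def by simp
  also have "s + (i + (s' - s)) = s' + i" using assms(3) by simp
  also have "\<xi> (s' + i) = q ! i" using assms(2) i unfolding occurs_at_def by simp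
  finally show "q ! i = q ! (i + (s' - s))" by simp
qed

(* If q has a period p with 2p <= |q|, its border of length |q| - p is again
   a quasiperiod: each occurrence of q contains it at offsets 0 and p. *)
lemma covers_border:
  assumes cov: "covers \<xi> q" and per: "period q p" and short: "2 * p \<le> length q"
  shows "quasiperiod \<xi> (take (length q - p) q)"
proof -
  let ?b = "take (length q - p) q"
  have "0 < p" using per by (simp add: period_def)
  hence "?b \<noteq> []" using short by (cases q) auto
  have at_start: "occurs_at \<xi> ?b s" if "occurs_at \<xi> q s" for s
    using that unfolding occurs_at_def by simp
  have shifted: "occurs_at \<xi> ?b (s + p)" if "occurs_at \<xi> q s" for s
    unfolding occurs_at_def
  proof (intro allI impI)
    fix k assume k: "k < length ?b"
    have "\<xi> (s + p + k) = q ! (k + p)"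
      using that k unfolding occurs_at_def by (simp add: add.assoc add.commute[of p])
    also have "\<dots> = ?b ! k" using per k unfolding period_def by simp
    finally show "\<xi> (s + p + k) = ?b ! k" .
  qed
  have "covers \<xi> ?b"
    unfolding covers_def
  proof
    fix j
    obtain s where s: "occurs_at \<xi> q s" "s \<le> j" "j < s + length q"
      using cov unfolding covers_def by blast
    show "\<exists>s. occurs_at \<xi> ?b s \<and> s \<le> j \<and> j < s + length ?b"
    proof (cases "j < s + (length q - p)")
      case True thus ?thesis using at_start[OF s(1)] s by auto
    next
      case False thus ?thesis using shifted[OF s(1)] s short by (intro exI[of _ "s + p"]) auto
    qed
  qed
  with \<open>?b \<noteq> []\<close> show ?thesis by (simp add: quasiperiod_iff_covers)
qed

lemma shortest_quasiperiod:
  assumes "quasiperiodic \<xi>"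
  obtains q p where "covers \<xi> q" "spaced \<xi> q p" "1 \<le> p" "p \<le> length q" "length q < 2 * p"
proof -
  define m where "m = (LEAST m. \<exists>q. quasiperiod \<xi> q \<and> length q = m)"
  obtain q where q: "quasiperiod \<xi> q" "length q = m"
    using assms LeastI_ex[of "\<lambda>m. \<exists>q. quasiperiod \<xi> q \<and> length q = m"]
    unfolding m_def quasiperiodic_def by blast
  have minimal: "m \<le> length q'" if "quasiperiod \<xi> q'" for q'
    unfolding m_def using that by (intro Least_le) blast
  have cov: "covers \<xi> q" and "q \<noteq> []" using q(1) by (simp_all add: quasiperiod_iff_covers)
  hence "period q m" using q(2) by (cases q) (auto simp: period_def)
  define p where "p = (LEAST d. period q d)"
  have per: "period q p" unfolding p_def using \<open>period q m\<close> by (rule LeastI)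
  have least_period: "p \<le> d" if "period q d" for d unfolding p_def using that by (rule Least_le)
  have "1 \<le> p" "p \<le> m" using per q(2) by (auto simp: period_def)
  moreover have "m < 2 * p"
  proof (rule ccontr)
    assume "\<not> m < 2 * p"
    hence "m \<le> m - p" using minimal[OF covers_border[OF cov per]] q(2) by simp
    with \<open>1 \<le> p\<close> \<open>p \<le> m\<close> show False by simp
  qed
  moreover have "spaced \<xi> q p"
    unfolding spaced_def
  proof (intro allI impI)
    fix s s' assume occ: "occurs_at \<xi> q s" "occurs_at \<xi> q s'" "s < s'"
    show "p \<le> s' - s"
    proof (cases "s' - s < length q")
      case True thus ?thesis using least_period occurrence_distance_period[OF occ True] by blast
    qed (use \<open>p \<le> m\<close> q(2) in simp)
  qed
  ultimately show ?thesis using that cov q(2) by blast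
qed

lemma anchored_short: "N \<le> length q \<Longrightarrow> anchored \<xi> q N \<subseteq> {take N q}"
  by (auto simp: anchored_def prefix_factor)

lemma anchored_split:
  assumes cov: "covers \<xi> q" and sp: "spaced \<xi> q p" and long: "length q < N"
  shows "anchored \<xi> q N \<subseteq> (\<Union>d\<in>{p..length q}. (\<lambda>w. take d q @ w) ` anchored \<xi> q (N - d))"
proof
  fix w assume "w \<in> anchored \<xi> q N"
  then obtain s where s: "occurs_at \<xi> q s" "w = factor \<xi> s N" by (auto simp: anchored_def)
  obtain s' where s': "occurs_at \<xi> q s'" "s < s'" "s' \<le> s + length q"
    using next_occurrence[OF cov s(1)] by blast
  define d where "d = s' - s"
  have d: "p \<le> d" "d \<le> length q" using sp s s' unfolding spaced_def d_def by auto
  have "w = factor \<xi> s d @ factor \<xi> (s + d) (N - d)"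
    using s(2) factor_append[of \<xi> s d "N - d"] d long by simp
  also have "\<dots> = take d q @ factor \<xi> s' (N - d)"
    using prefix_factor[OF s(1) d(2)] s'(2) by (simp add: d_def)
  finally have "w \<in> (\<lambda>w. take d q @ w) ` anchored \<xi> q (N - d)"
    using s'(1) by (auto simp: anchored_def)
  with d show "w \<in> (\<Union>d\<in>{p..length q}. (\<lambda>w. take d q @ w) ` anchored \<xi> q (N - d))" by auto
qed

lemma card_anchored_recursion:
  fixes \<xi> :: "nat \<Rightarrow> 'a::finite"
  assumes "covers \<xi> q" "spaced \<xi> q p" "length q < N"
  shows "card (anchored \<xi> q N) \<le> (\<Sum>d=p..length q. card (anchored \<xi> q (N - d)))"
proof -
  let ?U = "\<Union>d\<in>{p..length q}. (\<lambda>w. take d q @ w) ` anchored \<xi> q (N - d)"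
  have "card (anchored \<xi> q N) \<le> card ?U"
    using anchored_split[OF assms] by (intro card_mono) (auto intro: finite_anchored)
  also have "\<dots> \<le> (\<Sum>d=p..length q. card ((\<lambda>w. take d q @ w) ` anchored \<xi> q (N - d)))"
    by (rule card_UN_le) simp
  also have "\<dots> \<le> (\<Sum>d=p..length q. card (anchored \<xi> q (N - d)))"
    by (intro sum_mono card_image_le finite_anchored)
  finally show ?thesis .
qed

lemma card_anchored_bound:
  fixes \<xi> :: "nat \<Rightarrow> 'a::finite" and lam :: real
  assumes cov: "covers \<xi> q" and sp: "spaced \<xi> q p" and p: "1 \<le> p" and lam: "1 \<le> lam"
    and kraft: "(\<Sum>d=p..length q. (1/lam)^d) \<le> 1"
  shows "real (card (anchored \<xi> q N)) \<le> lam^N"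
proof (induction N rule: less_induct)
  case (less N)
  show ?case
  proof (cases "N \<le> length q")
    case True
    have "card (anchored \<xi> q N) \<le> 1"
      using card_mono[OF _ anchored_short[OF True]] by simp
    hence "real (card (anchored \<xi> q N)) \<le> 1" by simp
    also have "1 \<le> lam^N" using lam by (rule one_le_power)
    finally show ?thesis by simp
  next
    case False
    have "real (card (anchored \<xi> q N)) \<le> (\<Sum>d=p..length q. real (card (anchored \<xi> q (N - d))))"
      using card_anchored_recursion[OF cov sp] False
      by (simp only: of_nat_sum[symmetric] of_nat_le_iff not_le)
    also have "\<dots> \<le> (\<Sum>d=p..length q. lam^(N - d))"
      using p False by (intro sum_mono less.IH) auto
    also have "\<dots> = (\<Sum>d=p..length q. lam^N * (1/lam)^d)"
      using lam False
      by (intro sum.cong refl) (simp add: power_diff power_one_over divide_inverse power_inverse)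
    also have "\<dots> = lam^N * (\<Sum>d=p..length q. (1/lam)^d)" by (simp add: sum_distrib_left)
    also have "\<dots> \<le> lam^N" using kraft lam by (simp add: mult_left_le)
    finally show ?thesis .
  qed
qed

lemma factor_decomposition:
  assumes cov: "covers \<xi> q" and n: "length q \<le> n"
  shows "range (\<lambda>i. factor \<xi> i n) \<subseteq>
     (\<Union>d\<in>{1..length q}. \<Union>j\<in>{1..length q}.
        (\<lambda>w. drop (d - j) (take d q) @ w) ` anchored \<xi> q (n - j))"
proof
  fix w assume "w \<in> range (\<lambda>i. factor \<xi> i n)"
  then obtain i where w: "w = factor \<xi> i n" by blast
  define S where "S = {s. occurs_at \<xi> q s \<and> s \<le> i}"
  have "finite S" by (rule finite_subset[of _ "{..i}"]) (auto simp: S_def)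
  moreover have "S \<noteq> {}" using cov unfolding S_def covers_def by blast
  ultimately have "Max S \<in> S" by (rule Max_in)
  define s where "s = Max S"
  have s: "occurs_at \<xi> q s" "s \<le> i" using \<open>Max S \<in> S\<close> by (simp_all add: s_def S_def)
  obtain s' where s': "occurs_at \<xi> q s'" "s < s'" "s' \<le> s + length q"
    using next_occurrence[OF cov s(1)] by blast
  have "i < s'"
  proof (rule ccontr)
    assume "\<not> i < s'"
    hence "s' \<le> s" using s'(1) \<open>finite S\<close> by (simp add: s_def S_def)
    with s'(2) show False by simp
  qed
  define d where "d = s' - s"
  define j where "j = s' - i"
  have dj: "1 \<le> d" "d \<le> length q" "1 \<le> j" "j \<le> d" "j \<le> n" "s + (d - j) = i" "i + j = s'"
    using s s' \<open>i < s'\<close> n by (auto simp: d_def j_def)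
  have "w = factor \<xi> i j @ factor \<xi> (i + j) (n - j)"
    using w factor_append[of \<xi> i j "n - j"] dj by simp
  also have "factor \<xi> i j = drop (d - j) (take d q)"
    using factor_within_occurrence[OF s(1), of "d - j" d] dj by simp
  finally have "w \<in> (\<lambda>w. drop (d - j) (take d q) @ w) ` anchored \<xi> q (n - j)"
    using s'(1) dj by (auto simp: anchored_def)
  moreover have "d \<in> {1..length q}" "j \<in> {1..length q}" using dj by auto
  ultimately show "w \<in> (\<Union>d\<in>{1..length q}. \<Union>j\<in>{1..length q}.
        (\<lambda>w. drop (d - j) (take d q) @ w) ` anchored \<xi> q (n - j))" by blast
qed

lemma complexity_bound:
  fixes \<xi> :: "nat \<Rightarrow> 'a::finite" and lam :: real
  assumes cov: "covers \<xi> q" and sp: "spaced \<xi> q p" and p: "1 \<le> p" and lam: "1 \<le> lam"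
    and kraft: "(\<Sum>d=p..length q. (1/lam)^d) \<le> 1" and n: "length q \<le> n"
  shows "real (subword_complexity \<xi> n) \<le> real (length q) * real (length q) * lam^n"
proof -
  let ?m = "length q"
  let ?B = "\<lambda>d j. (\<lambda>w. drop (d - j) (take d q) @ w) ` anchored \<xi> q (n - j)"
  have "subword_complexity \<xi> n = card (range (\<lambda>i. factor \<xi> i n))"
    by (simp add: subword_complexity_def factors_of_length)
  also have "\<dots> \<le> card (\<Union>d\<in>{1..?m}. \<Union>j\<in>{1..?m}. ?B d j)"
    using factor_decomposition[OF cov n] by (intro card_mono) (auto intro: finite_anchored)
  also have "\<dots> \<le> (\<Sum>d=1..?m. card (\<Union>j\<in>{1..?m}. ?B d j))"
    by (rule card_UN_le) simp
  also have "\<dots> \<le> (\<Sum>d=1..?m. \<Sum>j=1..?m. card (?B d j))"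
    by (intro sum_mono card_UN_le) simp
  also have "\<dots> \<le> (\<Sum>d=1..?m. \<Sum>j=1..?m. card (anchored \<xi> q (n - j)))"
    by (intro sum_mono card_image_le finite_anchored)
  finally have "real (subword_complexity \<xi> n)
      \<le> (\<Sum>d=1..?m. \<Sum>j=1..?m. real (card (anchored \<xi> q (n - j))))"
    by (simp only: of_nat_sum[symmetric] of_nat_le_iff)
  also have "\<dots> \<le> (\<Sum>d=1..?m. \<Sum>j=1..?m. lam^n)"
  proof (intro sum_mono)
    fix j
    have "real (card (anchored \<xi> q (n - j))) \<le> lam^(n - j)"
      by (rule card_anchored_bound[OF cov sp p lam kraft])
    also have "\<dots> \<le> lam^n" using lam by (intro power_increasing) auto
    finally show "real (card (anchored \<xi> q (n - j))) \<le> lam^n" .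
  qed
  also have "\<dots> = real ?m * real ?m * lam^n" by simp
  finally show ?thesis .
qed

lemma quasiperiodic_complexity:
  fixes \<xi> :: "nat \<Rightarrow> 'a::finite"
  assumes "quasiperiodic \<xi>"
  shows "\<exists>n\<^sub>0. \<forall>n\<ge>n\<^sub>0. real (subword_complexity \<xi> n) \<le> 25 * t_P^n"
proof -
  obtain q p where cov: "covers \<xi> q" and sp: "spaced \<xi> q p"
    and p: "1 \<le> p" "p \<le> length q" "length q < 2 * p"
    using shortest_quasiperiod[OF assms] .
  let ?m = "length q"
  have t1: "1 < t_P" using plastic_number by simp
  have kraft: "(\<Sum>d=p..?m. (1/t_P)^d) \<le> 1" and strict: "4 \<le> p \<Longrightarrow> (\<Sum>d=p..?m. (1/t_P)^d) < 1"
    using plastic_kraft[OF p] by auto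
  show ?thesis
  proof (cases "p \<le> 3")
    case True
    have "?m \<le> 5" using True p by linarith
    hence "real ?m * real ?m \<le> 5 * 5" by (intro mult_mono) auto
    hence m_small: "real ?m * real ?m \<le> 25" by simp
    have "real (subword_complexity \<xi> n) \<le> 25 * t_P^n" if "?m \<le> n" for n
    proof -
      have "real (subword_complexity \<xi> n) \<le> real ?m * real ?m * t_P^n"
        using complexity_bound[OF cov sp p(1) _ kraft that] t1 by simp
      also have "\<dots> \<le> 25 * t_P^n" using m_small t1 by (intro mult_right_mono) auto
      finally show ?thesis .
    qed
    thus ?thesis by blast
  next
    case False
    then obtain lam where lam: "1 \<le> lam" "lam < t_P" "(\<Sum>d=p..?m. (1/lam)^d) \<le> 1"
      using kraft_slack[OF t1 p(1,2) strict] by auto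
    obtain N where N: "\<And>n. N \<le> n \<Longrightarrow> real ?m * real ?m * lam^n \<le> 25 * t_P^n"
      using eventually_dominated[of lam t_P 25 "real ?m * real ?m"] lam by auto
    have "real (subword_complexity \<xi> n) \<le> 25 * t_P^n" if "max N ?m \<le> n" for n
      using complexity_bound[OF cov sp p(1) lam(1,3)] N that by (meson max.boundedE order_trans)
    thus ?thesis by blast
  qed
qed

theorem theorem3:
  assumes "card (UNIV :: 'a::finite set) \<ge> 2"
  shows "\<exists>c::real > 0. \<forall>\<xi> :: nat \<Rightarrow> 'a. quasiperiodic \<xi> \<longrightarrow>
           (\<exists>n\<^sub>\<xi>. \<forall>n \<ge> n\<^sub>\<xi>. real (subword_complexity \<xi> n) \<le> c * t_P ^ n)"
  using quasiperiodic_complexity by (intro exI[of _ 25]) auto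

end
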